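(* Consider Algorithm 1 instantiated with a locally computed procedure choose_leader. If choose_leader returns the same honest party at all honest parties for infinitely many rounds, then each honest party commits an unbounded number of blocks.
   Context: System model: $n$ parties $\Pi=\{p_1,\dots,p_n\}$, at most $f<n/3$ faulty. A party is crashed if it halts prematurely; Byzantine if it deviates from the protocol arbitrarily; honest if neither. Non-Byzantine parties follow the protocol until they (possibly) crash. Communication is eventually synchronous: there is an unknown global stabilization time (GST) after which every message arrives within a known bound $\delta$. Blocks: a block contains transactions, a link to a parent block (implied chain back to genesis), a round number, an author id, and a certificate from which a set of $2f+1$ endorsing parties can be obtained. certified$(B,r)$ is a local predicate saying $B$ has a valid certificate ($2f+1$ endorsements) for round $r$. $B\longrightarrow B'$ means $B$ is on $B'$'s implied chain. Committing a block commits its implied chain. LBR abstraction: each party can invoke $LBR(r,\ell)$; non-Byzantine parties endorse a block with round $r$ and author $\ell$ only by calling $LBR(r,\ell)$. Every invocation returns within $\Delta_l>c\delta$ time ($c$ an implementation constant) a block with round number $r'\le r$. Round $r$ has $k$ LBR-synchronized($\ell$) invocations if $k$ honest parties invoke $LBR(r,\ell)$ after GST and their execution intervals share a common intersection of length at least $c\delta$. Guarantees: (Endorsement) if certified$(B,r)$ then $B$'s endorser set has $2f+1$ parties; (Agreement) any two certified blocks returned to honest parties by LBR satisfy $B\longrightarrow B'$ or $B'\longrightarrow B$; (Progress) if round $r$ has $k\ge 2f+1$ LBR-synchronized($\ell$) invocations and $\ell$ is honest, they all return a certified block with round number $r$ authored by $\ell$; (Blocking) if a non-Byzantine $\ell$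 never invokes $LBR(r,\ell)$, no $LBR(r,\ell)$ invocation returns a certified block formed in round $r$; (Reputation) if a non-Byzantine $p$ never invokes LBR for round $r$, no certified block with round number $r$ has $p$ among its endorsers. Pacemaker: produces new_round$(r)$ notifications at honest parties for every $r$; if all new_round$(r)$ notifications at non-Byzantine parties occur after GST, the first at $T_f$ and last at $T_l$, then $T_l-T_f\le\delta$ and no non-Byzantine party receives new_round$(r+1)$ before $T_l+\Delta_p$, where $\Delta_p=\Delta_l$. Algorithm 1 (party $p_i$): initially commit_head $:=$ genesis. Upon new_round$(r)$: leader $:=$ choose_leader$(r,$ commit_head$)$ (a local computation returning a party in $\Pi$); $B:=LBR(r,\text{leader})$; if commit_head $\longrightarrow B$, commit $B$ (and all not-yet-committed blocks on its implied chain) and set commit_head $:=B$. *)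

theory Defs
  imports Complex_Main
begin

text \<open>System model for Algorithm 1 (abstract LBR + Pacemaker).
  Parties have a finite type 'p (n = card (UNIV :: 'p set)); blocks have a type 'b.\<close>

definition on_chain :: "('b \<Rightarrow> 'b) \<Rightarrow> 'b \<Rightarrow> 'b \<Rightarrow> bool" where
  "on_chain parent B B' \<longleftrightarrow> (\<exists>k. (parent ^^ k) B' = B)"

record ('p, 'b) execution =
  byz :: "'p set"
  crashed :: "'p set"
  fbound :: nat
  gst :: real
  delta :: real                         \<comment> \<open>message delay bound after GST\<close>
  cconst :: real                        \<comment> \<open>implementation constant c of LBR\<close>
  Delta_l :: real                       \<comment> \<open>LBR bound, also Delta_p = Delta_l\<close>
  genesis :: 'b
  parent :: "'b \<Rightarrow> 'b"
  rnd :: "'b \<Rightarrow> nat"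
  author :: "'b \<Rightarrow> 'p"
  endorsers :: "'b \<Rightarrow> 'p set"
  certified :: "'b \<Rightarrow> nat \<Rightarrow> bool"
  new_round :: "'p \<Rightarrow> nat \<Rightarrow> real option"  \<comment> \<open>time of new_round(r) at p, None if never\<close>
  choose_leader :: "nat \<Rightarrow> 'b \<Rightarrow> 'p"          \<comment> \<open>local computation choose_leader(r, commit_head)\<close>
  lbr_ret :: "'p \<Rightarrow> nat \<Rightarrow> 'b"              \<comment> \<open>block returned to honest p by its round-r LBR call\<close>

definition honest :: "('p, 'b, 'z) execution_scheme \<Rightarrow> 'p set" where
  "honest E = - (byz E \<union> crashed E)"

text \<open>commit_head of Algorithm 1 after processing rounds 1..r (from the returned blocks).\<close>
fun commit_head_seq :: "'b \<Rightarrow> ('b \<Rightarrow> 'b) \<Rightarrow> (nat \<Rightarrow> 'b) \<Rightarrow> nat \<Rightarrow> 'b" where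
  "commit_head_seq g par ret 0 = g"
| "commit_head_seq g par ret (Suc r) =
     (if on_chain par (commit_head_seq g par ret r) (ret (Suc r))
      then ret (Suc r) else commit_head_seq g par ret r)"

definition commit_head :: "('p, 'b, 'z) execution_scheme \<Rightarrow> 'p \<Rightarrow> nat \<Rightarrow> 'b" where
  "commit_head E p r = commit_head_seq (genesis E) (parent E) (lbr_ret E p) r"

text \<open>Leader used by p in round r (r \<ge> 1): computed from commit_head after round r-1.\<close>
definition leader :: "('p, 'b, 'z) execution_scheme \<Rightarrow> 'p \<Rightarrow> nat \<Rightarrow> 'p" where
  "leader E p r = choose_leader E r (commit_head E p (r - 1))"

definition committed :: "('p, 'b, 'z) execution_scheme \<Rightarrow> 'p \<Rightarrow> nat \<Rightarrow> 'b set" where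
  "committed E p r = {B. on_chain (parent E) B (commit_head E p r)}"

definition nr :: "('p, 'b, 'z) execution_scheme \<Rightarrow> 'p \<Rightarrow> nat \<Rightarrow> real" where
  "nr E p r = the (new_round E p r)"

definition system_model :: "('p::finite, 'b, 'z) execution_scheme \<Rightarrow> bool" where
  "system_model E \<longleftrightarrow>
     byz E \<inter> crashed E = {} \<and>
     card (byz E \<union> crashed E) \<le> fbound E \<and> 3 * fbound E < card (UNIV :: 'p set) \<and>
     delta E > 0 \<and> Delta_l E > cconst E * delta E \<and>
     parent E (genesis E) = genesis E \<and>
     (\<forall>B. B \<noteq> genesis E \<longrightarrow> rnd E (parent E B) < rnd E B)"

definition pacemaker :: "('p, 'b, 'z) execution_scheme \<Rightarrow> bool" where
  "pacemaker E \<longleftrightarrow>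
     (\<forall>p r. p \<in> honest E \<and> r \<ge> 1 \<longrightarrow> new_round E p r \<noteq> None) \<and>
     (\<forall>p T. p \<notin> byz E \<longrightarrow> finite {r. \<exists>t. new_round E p r = Some t \<and> t \<le> T}) \<and>
     (\<forall>r \<ge> 1.
        (\<forall>p t. p \<notin> byz E \<and> new_round E p r = Some t \<longrightarrow> gst E \<le> t) \<longrightarrow>
        ((\<forall>p q tp tq. p \<notin> byz E \<and> q \<notin> byz E \<and> new_round E p r = Some tp \<and>
              new_round E q r = Some tq \<longrightarrow> tq - tp \<le> delta E) \<and>
         (\<forall>p q tp t'. p \<notin> byz E \<and> q \<notin> byz E \<and> new_round E p r = Some tp \<and>
              new_round E q (Suc r) = Some t' \<longrightarrow> tp + Delta_l E \<le> t')))"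

definition lbr_guarantees :: "('p, 'b, 'z) execution_scheme \<Rightarrow> bool" where
  "lbr_guarantees E \<longleftrightarrow>
     \<comment> \<open>every honest invocation returns a (certified) block with round number \<le> r\<close>
     (\<forall>p r. p \<in> honest E \<and> r \<ge> 1 \<longrightarrow>
        rnd E (lbr_ret E p r) \<le> r \<and> certified E (lbr_ret E p r) (rnd E (lbr_ret E p r))) \<and>
     \<comment> \<open>Endorsement\<close>
     (\<forall>B r. certified E B r \<longrightarrow> card (endorsers E B) = 2 * fbound E + 1) \<and>
     \<comment> \<open>Agreement\<close>
     (\<forall>p q r r'. p \<in> honest E \<and> q \<in> honest E \<and> r \<ge> 1 \<and> r' \<ge> 1 \<and>
        certified E (lbr_ret E p r) (rnd E (lbr_ret E p r)) \<and>
        certified E (lbr_ret E q r') (rnd E (lbr_ret E q r')) \<longrightarrow>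
        on_chain (parent E) (lbr_ret E p r) (lbr_ret E q r') \<or>
        on_chain (parent E) (lbr_ret E q r') (lbr_ret E p r)) \<and>
     \<comment> \<open>Progress (execution interval of LBR(r) at p: from new_round(r) to new_round(r+1))\<close>
     (\<forall>r l S. r \<ge> 1 \<and> l \<in> honest E \<and> S \<subseteq> honest E \<and> card S \<ge> 2 * fbound E + 1 \<and>
        (\<forall>p\<in>S. leader E p r = l \<and> gst E \<le> nr E p r) \<and>
        (\<exists>a b. b - a \<ge> cconst E * delta E \<and>
               (\<forall>p\<in>S. nr E p r \<le> a \<and> b \<le> nr E p (Suc r))) \<longrightarrow>
        (\<forall>p\<in>S. certified E (lbr_ret E p r) r \<and> rnd E (lbr_ret E p r) = r \<and>
                author E (lbr_ret E p r) = l))"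

end

theory Submission
  imports Defs
begin

text \<open>Only finitely many rounds start before GST, and in a round that starts after GST with a
  common honest leader, Progress makes the LBR call of every honest party return a block of that
  very round. Such a block has a larger round number than every block returned earlier, so by
  Agreement it extends the current commit head and is committed. Hence the commit head of an honest
  party has round number r for infinitely many r, and the committed blocks are infinitely many.\<close>

lemma on_chain_refl: "on_chain par B B"
  unfolding on_chain_def by (metis funpow_0)

lemma on_chain_rank_le:
  fixes rk :: "'b \<Rightarrow> 'c::preorder"
  assumes rk_parent_le: "\<And>B. rk (par B) \<le> rk B" and "on_chain par B B'"
  shows "rk B \<le> rk B'"
proof -
  have "rk ((par ^^ k) B') \<le> rk B'" for k
  proof (induction k)
    case (Suc k)
    then show ?case using rk_parent_le order_trans by (metis comp_apply funpow.simps(2))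
  qed simp
  then show ?thesis using \<open>on_chain par B B'\<close> unfolding on_chain_def by blast
qed

lemma on_chain_from_root:
  fixes rk :: "'b \<Rightarrow> nat"
  assumes "\<And>B. B \<noteq> g \<Longrightarrow> rk (par B) < rk B"
  shows "on_chain par g B"
proof (induction "rk B" arbitrary: B rule: less_induct)
  case less
  show ?case
  proof (cases "B = g")
    case True
    then show ?thesis by (simp add: on_chain_refl)
  next
    case False
    then obtain k where "(par ^^ k) (par B) = g"
      using less assms unfolding on_chain_def by blast
    then have "(par ^^ Suc k) B = g" by (simp add: funpow_Suc_right del: funpow.simps)
    then show ?thesis unfolding on_chain_def by blast
  qed
qed

lemma commit_head_seq_cases:
  "commit_head_seq g par ret r = g \<or>
   (\<exists>r'. 1 \<le> r' \<and> r' \<le> r \<and> commit_head_seq g par ret r = ret r')"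
  by (induction r) (auto intro: le_SucI)

lemma commit_head_in_committed: "commit_head E p r \<in> committed E p r"
  unfolding committed_def by (simp add: on_chain_refl)

lemma card_honest_ge:
  fixes E :: "('p::finite, 'b, 'z) execution_scheme"
  assumes "system_model E"
  shows "2 * fbound E + 1 \<le> card (honest E)"
proof -
  have "card (honest E) = card (UNIV :: 'p set) - card (byz E \<union> crashed E)"
    unfolding honest_def Compl_eq_Diff_UNIV by (rule card_Diff_subset) auto
  then show ?thesis using assms unfolding system_model_def by linarith
qed

lemma honest_not_byz: "q \<in> honest E \<Longrightarrow> q \<notin> byz E"
  unfolding honest_def by simp

lemma new_round_nr:
  assumes "pacemaker E" and "q \<in> honest E" and "r \<ge> 1"
  shows "new_round E q r = Some (nr E q r)"
  using assms unfolding pacemaker_def nr_def by auto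

definition round_after_gst :: "('p, 'b, 'z) execution_scheme \<Rightarrow> nat \<Rightarrow> bool" where
  "round_after_gst E r \<longleftrightarrow>
     (\<forall>q t. q \<notin> byz E \<and> new_round E q r = Some t \<longrightarrow> gst E \<le> t)"

lemma eventually_round_after_gst:
  fixes E :: "('p::finite, 'b, 'z) execution_scheme"
  assumes "pacemaker E"
  shows "\<forall>\<^sub>\<infinity>r. round_after_gst E r"
proof -
  have "{r. \<not> round_after_gst E r} \<subseteq>
        (\<Union>q\<in>- byz E. {r. \<exists>t. new_round E q r = Some t \<and> t \<le> gst E})"
    unfolding round_after_gst_def by force
  moreover have "finite (\<Union>q\<in>- byz E. {r. \<exists>t. new_round E q r = Some t \<and> t \<le> gst E})"
    using assms unfolding pacemaker_def by simp
  ultimately show ?thesis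
    unfolding eventually_cofinite by (rule finite_subset)
qed

text \<open>All honest LBR(r) intervals contain [a, a + Delta_l] for the last honest new_round(r) time a,
  since by the pacemaker no new_round(r+1) comes earlier than a + Delta_l.\<close>

lemma honest_lbr_intervals_overlap:
  fixes E :: "('p::finite, 'b, 'z) execution_scheme"
  assumes "system_model E" and "pacemaker E" and "r \<ge> 1" and "round_after_gst E r"
  shows "\<exists>a b. cconst E * delta E \<le> b - a \<and>
           (\<forall>p\<in>honest E. nr E p r \<le> a \<and> b \<le> nr E p (Suc r))"
proof -
  have Delta_l_after: "tp + Delta_l E \<le> t'"
    if "p \<notin> byz E" "q \<notin> byz E" "new_round E p r = Some tp" "new_round E q (Suc r) = Some t'"
    for p q tp t'
    using assms(2-4) that unfolding pacemaker_def round_after_gst_def by blast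
  define a where "a = Max ((\<lambda>q. nr E q r) ` honest E)"
  have "honest E \<noteq> {}" using card_honest_ge[OF assms(1)] by auto
  then have "a \<in> (\<lambda>q. nr E q r) ` honest E"
    unfolding a_def by (intro Max_in) auto
  then obtain q0 where q0: "q0 \<in> honest E" "a = nr E q0 r" by blast
  have "nr E p r \<le> a \<and> a + Delta_l E \<le> nr E p (Suc r)" if "p \<in> honest E" for p
  proof
    show "nr E p r \<le> a" unfolding a_def using that by simp
    show "a + Delta_l E \<le> nr E p (Suc r)"
      using q0 Delta_l_after[OF honest_not_byz[OF q0(1)] honest_not_byz[OF that]
          new_round_nr[OF assms(2) q0(1) assms(3)] new_round_nr[OF assms(2) that]] by simp
  qed
  moreover have "cconst E * delta E \<le> (a + Delta_l E) - a"
    using assms(1) unfolding system_model_def by simp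
  ultimately show ?thesis by blast
qed

lemma lbr_ret_rnd_le:
  assumes "lbr_guarantees E" and "p \<in> honest E" and "r \<ge> 1"
  shows "rnd E (lbr_ret E p r) \<le> r"
  using assms(1)[unfolded lbr_guarantees_def, THEN conjunct1,
      rule_format, unfolded conj_imp_eq_imp_imp, OF assms(2,3)] ..

lemma lbr_agreement:
  assumes "lbr_guarantees E" and "p \<in> honest E" and "r \<ge> 1" and "r' \<ge> 1"
  shows "on_chain (parent E) (lbr_ret E p r) (lbr_ret E p r') \<or>
         on_chain (parent E) (lbr_ret E p r') (lbr_ret E p r)"
proof -
  have "certified E (lbr_ret E p k) (rnd E (lbr_ret E p k))" if "k \<ge> 1" for k
    using assms(1)[unfolded lbr_guarantees_def, THEN conjunct1,
        rule_format, unfolded conj_imp_eq_imp_imp, OF assms(2) that] ..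
  then show ?thesis
    using assms(1)[unfolded lbr_guarantees_def, THEN conjunct2, THEN conjunct2, THEN conjunct1,
        rule_format, unfolded conj_imp_eq_imp_imp, OF assms(2,2,3,4)] assms(3,4) by blast
qed

lemma lbr_progress:
  assumes "lbr_guarantees E" and "r \<ge> 1" and "l \<in> honest E" and "S \<subseteq> honest E"
    and "2 * fbound E + 1 \<le> card S" and "\<forall>p\<in>S. leader E p r = l \<and> gst E \<le> nr E p r"
    and "\<exists>a b. cconst E * delta E \<le> b - a \<and> (\<forall>p\<in>S. nr E p r \<le> a \<and> b \<le> nr E p (Suc r))"
    and "p \<in> S"
  shows "rnd E (lbr_ret E p r) = r"
  using assms(1)[unfolded lbr_guarantees_def, THEN conjunct2, THEN conjunct2, THEN conjunct2,
      rule_format, unfolded conj_imp_eq_imp_imp, OF assms(2-7)] assms(8) by blast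

lemma lbr_ret_rnd_eq_if_common_leader:
  fixes E :: "('p::finite, 'b, 'z) execution_scheme"
  assumes "system_model E" and "pacemaker E" and "lbr_guarantees E"
    and "r \<ge> 1" and "round_after_gst E r"
    and "l \<in> honest E" and "\<forall>q\<in>honest E. leader E q r = l" and "p \<in> honest E"
  shows "rnd E (lbr_ret E p r) = r"
proof -
  have "gst E \<le> nr E q r" if "q \<in> honest E" for q
    using assms(5) honest_not_byz[OF that] new_round_nr[OF assms(2) that assms(4)]
    unfolding round_after_gst_def by blast
  then have "\<forall>q\<in>honest E. leader E q r = l \<and> gst E \<le> nr E q r"
    using assms(7) by blast
  then show ?thesis
    using lbr_progress[OF assms(3,4,6) order.refl card_honest_ge[OF assms(1)]]
      honest_lbr_intervals_overlap[OF assms(1,2,4,5)] assms(8) by blast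
qed

lemma lbr_ret_on_chain_if_rnd_less:
  assumes "system_model E" and "lbr_guarantees E" and "p \<in> honest E"
    and "r \<ge> 1" and "r' \<ge> 1" and "rnd E (lbr_ret E p r') < rnd E (lbr_ret E p r)"
  shows "on_chain (parent E) (lbr_ret E p r') (lbr_ret E p r)"
proof -
  have "rnd E (parent E B) \<le> rnd E B" for B
    using assms(1) unfolding system_model_def by (metis order.refl less_imp_le)
  then have "\<not> on_chain (parent E) (lbr_ret E p r) (lbr_ret E p r')"
    using assms(6) on_chain_rank_le by (metis not_le)
  then show ?thesis using lbr_agreement[OF assms(2-5)] by blast
qed

lemma commit_head_eq_lbr_ret:
  assumes "system_model E" and "lbr_guarantees E" and "p \<in> honest E"
    and "r \<ge> 1" and "rnd E (lbr_ret E p r) = r"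
  shows "commit_head E p r = lbr_ret E p r"
proof -
  obtain r0 where r0: "r = Suc r0" using assms(4) by (cases r) auto
  let ?head = "commit_head_seq (genesis E) (parent E) (lbr_ret E p) r0"
  have "on_chain (parent E) ?head (lbr_ret E p r)"
  proof (cases "?head = genesis E")
    case True
    then show ?thesis
      using assms(1) on_chain_from_root unfolding system_model_def by metis
  next
    case False
    then obtain r' where r': "1 \<le> r'" "r' \<le> r0" "?head = lbr_ret E p r'"
      using commit_head_seq_cases by metis
    have "rnd E (lbr_ret E p r') < rnd E (lbr_ret E p r)"
      using lbr_ret_rnd_le[OF assms(2,3) r'(1)] r'(2) r0 assms(5) by simp
    then show ?thesis
      using lbr_ret_on_chain_if_rnd_less[OF assms(1-4) r'(1)] r'(3) by simp
  qed
  then show ?thesis unfolding commit_head_def using r0 by simp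
qed

theorem lemma9:
  fixes E :: "('p::finite, 'b) execution"
  assumes "system_model E" and "pacemaker E" and "lbr_guarantees E"
    and "infinite {r. r \<ge> 1 \<and> (\<exists>l\<in>honest E. \<forall>q\<in>honest E. leader E q r = l)}"
    and "p \<in> honest E"
  shows "infinite (\<Union>r. committed E p r)"
proof -
  have "\<exists>\<^sub>\<infinity>r. r \<ge> 1 \<and> (\<exists>l\<in>honest E. \<forall>q\<in>honest E. leader E q r = l)"
    using assms(4) by (simp add: frequently_cofinite)
  then have "\<exists>\<^sub>\<infinity>r. (r \<ge> 1 \<and> (\<exists>l\<in>honest E. \<forall>q\<in>honest E. leader E q r = l)) \<and>
               round_after_gst E r"
    using eventually_round_after_gst[OF assms(2)] by (rule frequently_eventually_frequently)
  then have "\<exists>\<^sub>\<infinity>r. rnd E (commit_head E p r) = r"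
  proof (rule frequently_elim1, elim conjE bexE)
    fix r l
    assume "r \<ge> 1" "l \<in> honest E" "\<forall>q\<in>honest E. leader E q r = l" "round_after_gst E r"
    then have "rnd E (lbr_ret E p r) = r"
      using lbr_ret_rnd_eq_if_common_leader[OF assms(1-3)] assms(5) by blast
    then show "rnd E (commit_head E p r) = r"
      using commit_head_eq_lbr_ret[OF assms(1,3,5) \<open>r \<ge> 1\<close>] by simp
  qed
  then have "infinite {r. rnd E (commit_head E p r) = r}" by (simp add: frequently_cofinite)
  moreover have "{r. rnd E (commit_head E p r) = r} \<subseteq> rnd E ` (\<Union>r. committed E p r)"
  proof
    fix r assume "r \<in> {r. rnd E (commit_head E p r) = r}"
    then show "r \<in> rnd E ` (\<Union>r. committed E p r)"
      using commit_head_in_committed[of E p r]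
      by (intro image_eqI[of r _ "commit_head E p r"]) auto
  qed
  ultimately show ?thesis using finite_surj by blast
qed

end
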